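(* In every model of $\mathsf{Md}_\bot$ the following conditional equations hold for all elements $x,y$: (1) $x\cdot y=1\rightarrow 0\cdot y=0$; (2) $x\cdot y=1\rightarrow x^{-1}=y$; (3) $0\cdot x=0\cdot y\rightarrow 0\cdot(x\cdot y)=0\cdot x$; (4) $0\cdot x\cdot y=0\rightarrow 0\cdot x=0$; (5) $0\cdot(x+y)=0\rightarrow 0\cdot x=0$; (6) $0\cdot x^{-1}=0\rightarrow 0\cdot x=0$; (7) $0\cdot x=\bot\rightarrow x=\bot$.
   Context: The signature has one sort, constants $0,1,\bot$, binary operations $+,\cdot$ and unary operations $-$ and $(\,\cdot\,)^{-1}$; $^{-1}$ binds stronger than $\cdot$, which binds stronger than $+$. $\mathsf{Md}_\bot$ is the set of equations (variables universally quantified): $(x+y)+z=x+(y+z)$; $x+y=y+x$; $x+0=x$; $x+(-x)=0\cdot x$; $(x\cdot y)\cdot z=x\cdot(y\cdot z)$; $x\cdot y=y\cdot x$; $1\cdot x=x$; $x\cdot(y+z)=x\cdot y+x\cdot z$; $-(-x)=x$; $0\cdot(x\cdot x)=0\cdot x$; $(x^{-1})^{-1}=x+0\cdot x^{-1}$; $x\cdot x^{-1}=1+0\cdot x^{-1}$; $(x\cdot y)^{-1}=x^{-1}\cdot y^{-1}$; $1^{-1}=1$; $0^{-1}=\bot$; $x+\bot=\bot$; $x\cdot\bot=\bot$. *)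

theory Defs
  imports Main
begin

locale md_bot =
  fixes zero :: 'a and one :: 'a and bot :: 'a
    and add :: "'a \<Rightarrow> 'a \<Rightarrow> 'a"
    and mul :: "'a \<Rightarrow> 'a \<Rightarrow> 'a"
    and neg :: "'a \<Rightarrow> 'a"
    and inv :: "'a \<Rightarrow> 'a"
  assumes add_assoc: "\<And>x y z. add (add x y) z = add x (add y z)"
    and add_comm: "\<And>x y. add x y = add y x"
    and add_zero: "\<And>x. add x zero = x"
    and add_neg: "\<And>x. add x (neg x) = mul zero x"
    and mul_assoc: "\<And>x y z. mul (mul x y) z = mul x (mul y z)"
    and mul_comm: "\<And>x y. mul x y = mul y x"
    and one_mul: "\<And>x. mul one x = x"
    and distrib: "\<And>x y z. mul x (add y z) = add (mul x y) (mul x z)"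
    and neg_neg: "\<And>x. neg (neg x) = x"
    and zero_mul_sq: "\<And>x. mul zero (mul x x) = mul zero x"
    and inv_inv: "\<And>x. inv (inv x) = add x (mul zero (inv x))"
    and mul_inv: "\<And>x. mul x (inv x) = add one (mul zero (inv x))"
    and inv_mul: "\<And>x y. inv (mul x y) = mul (inv x) (inv y)"
    and inv_one: "inv one = one"
    and inv_zero: "inv zero = bot"
    and add_bot: "\<And>x. add x bot = bot"
    and mul_bot: "\<And>x. mul x bot = bot"

end

theory Submission
  imports Defs
begin

text \<open>The term \<open>0\<cdot>x\<close> acts as a definedness marker for \<open>x\<close>. The squaring law lets \<open>0\<cdot>x\<close>
absorb a factor \<open>y\<close> as soon as \<open>0\<cdot>x\<cdot>y = 0\<close>, which gives (4), and from it (1), (6)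
and (2); (5) follows by distributing \<open>0\<close> over \<open>y + x + (-x) = y + 0\<cdot>x\<close>.\<close>

context md_bot
begin

lemma mul_one: "mul x one = x"
  using mul_comm one_mul by metis

lemma add_zero_mul_self: "add x (mul zero x) = x"
proof -
  have "x = mul x (add one zero)"
    using add_zero mul_one by simp
  also have "\<dots> = add x (mul zero x)"
    using distrib mul_one mul_comm by metis
  finally show ?thesis ..
qed

lemma zero_mul_zero: "mul zero zero = zero"
  using add_zero_mul_self[of zero] add_comm add_zero by metis

lemma zero_mul_neg: "mul zero (neg x) = mul zero x"
  using add_neg[of x] add_neg[of "neg x"] neg_neg add_comm by metis

lemma zero_mul_eq_zero_of_mul_eq_zero:
  assumes "mul (mul zero x) y = zero"
  shows "mul zero x = zero"
proof -
  have "mul zero x = mul (mul (mul zero x) y) x"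
    using assms by simp
  also have "\<dots> = mul (mul zero (mul x x)) y"
    using mul_assoc mul_comm by metis
  also have "\<dots> = zero"
    using assms zero_mul_sq by simp
  finally show ?thesis .
qed

lemma zero_mul_eq_zero_of_mul_eq_one:
  assumes "mul x y = one"
  shows "mul zero y = zero"
proof (rule zero_mul_eq_zero_of_mul_eq_zero)
  show "mul (mul zero y) x = zero"
    using assms mul_assoc mul_comm mul_one by metis
qed

lemma inv_eq_of_mul_eq_one:
  assumes "mul x y = one"
  shows "inv x = y"
proof -
  have inv_inv_one: "mul (inv x) (inv y) = one"
    using assms inv_mul inv_one by metis
  have "mul y (inv y) = one"
    using mul_inv[of y] zero_mul_eq_zero_of_mul_eq_one[OF inv_inv_one] add_zero by simp
  then have "inv x = mul (inv x) (mul y (inv y))"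
    using mul_one by simp
  also have "\<dots> = mul y (mul (inv x) (inv y))"
    using mul_assoc mul_comm by metis
  finally show ?thesis
    using inv_inv_one mul_one by simp
qed

lemma zero_mul_mul_eq_of_zero_mul_eq:
  assumes "mul zero x = mul zero y"
  shows "mul zero (mul x y) = mul zero x"
proof -
  have "mul zero (mul x y) = mul x (mul zero y)"
    using mul_assoc mul_comm by metis
  also have "\<dots> = mul zero (mul x x)"
    using assms mul_assoc mul_comm by metis
  finally show ?thesis
    using zero_mul_sq by simp
qed

lemma zero_mul_eq_zero_of_zero_mul_add_eq_zero:
  assumes "mul zero (add x y) = zero"
  shows "mul zero x = zero"
proof -
  have "add y (add x (neg x)) = add y (mul zero x)"
    using add_neg by simp
  then have "add (mul zero (add y x)) (mul zero (neg x))
      = add (mul zero y) (mul zero (mul zero x))"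
    using add_assoc distrib by metis
  then have "add zero (mul zero x) = add (mul zero y) (mul zero x)"
    using assms add_comm zero_mul_neg mul_assoc zero_mul_zero by metis
  then show ?thesis
    using assms distrib add_comm add_zero by metis
qed

lemma zero_mul_eq_zero_of_zero_mul_inv_eq_zero:
  assumes "mul zero (inv x) = zero"
  shows "mul zero x = zero"
proof (rule zero_mul_eq_zero_of_mul_eq_one)
  show "mul (inv x) x = one"
    using assms mul_inv add_zero mul_comm by metis
qed

lemma eq_bot_of_zero_mul_eq_bot:
  assumes "mul zero x = bot"
  shows "x = bot"
  using add_zero_mul_self[of x] assms add_bot by simp

end

theorem proposition2p5:
  fixes zero one bot :: 'a
    and add mul :: "'a \<Rightarrow> 'a \<Rightarrow> 'a"
    and neg inv :: "'a \<Rightarrow> 'a"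
  assumes "md_bot zero one bot add mul neg inv"
  shows "(\<forall>x y. mul x y = one \<longrightarrow> mul zero y = zero) \<and>
    (\<forall>x y. mul x y = one \<longrightarrow> inv x = y) \<and>
    (\<forall>x y. mul zero x = mul zero y \<longrightarrow> mul zero (mul x y) = mul zero x) \<and>
    (\<forall>x y. mul (mul zero x) y = zero \<longrightarrow> mul zero x = zero) \<and>
    (\<forall>x y. mul zero (add x y) = zero \<longrightarrow> mul zero x = zero) \<and>
    (\<forall>x. mul zero (inv x) = zero \<longrightarrow> mul zero x = zero) \<and>
    (\<forall>x. mul zero x = bot \<longrightarrow> x = bot)"
proof -
  interpret md_bot zero one bot add mul neg inv
    by (fact assms)
  show ?thesis
    using zero_mul_eq_zero_of_mul_eq_one inv_eq_of_mul_eq_one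
      zero_mul_mul_eq_of_zero_mul_eq zero_mul_eq_zero_of_mul_eq_zero
      zero_mul_eq_zero_of_zero_mul_add_eq_zero zero_mul_eq_zero_of_zero_mul_inv_eq_zero
      eq_bot_of_zero_mul_eq_bot
    by blast
qed

end
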